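(* If a compact Hausdorff space $K$ has the extension property and satisfies the countable chain condition, then $K$ has countable spread, i.e., every discrete subset of $K$ is countable.
   Context: A topological space satisfies the countable chain condition if every family of pairwise disjoint nonempty open subsets is countable. $C(K)$ is the Banach space of real-valued continuous functions on $K$ with the supremum norm. For a closed $F\subseteq K$, an extension operator for $F$ in $K$ is a bounded linear map $E:C(F)\to C(K)$ with $E(f)|_F=f$ for all $f\in C(F)$. $K$ has the extension property if every nonempty closed subset of $K$ admits an extension operator in $K$. *)

theory Defs
  imports "HOL-Analysis.Analysis"
begin

definition ccc_space :: "'a topology \<Rightarrow> bool" where
  "ccc_space X \<longleftrightarrow>
     (\<forall>\<U>. (\<forall>U\<in>\<U>. openin X U \<and> U \<noteq> {}) \<and> pairwise disjnt \<U> \<longrightarrow> countable \<U>)"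

definition countable_spread :: "'a topology \<Rightarrow> bool" where
  "countable_spread X \<longleftrightarrow>
     (\<forall>D. D \<subseteq> topspace X \<and> subtopology X D = discrete_topology D \<longrightarrow> countable D)"

text \<open>Elements of C(F) are represented by real functions continuous on F (values off F
  are irrelevant).\<close>
definition extension_operator ::
  "'a topology \<Rightarrow> 'a set \<Rightarrow> (('a \<Rightarrow> real) \<Rightarrow> ('a \<Rightarrow> real)) \<Rightarrow> bool" where
  "extension_operator X F E \<longleftrightarrow>
     (\<forall>f. continuous_map (subtopology X F) euclideanreal f \<longrightarrow>
          continuous_map X euclideanreal (E f) \<and> (\<forall>x\<in>F. E f x = f x)) \<and>
     (\<forall>f g. continuous_map (subtopology X F) euclideanreal f \<longrightarrow>
            continuous_map (subtopology X F) euclideanreal g \<longrightarrow>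
            (\<forall>x\<in>topspace X. E (\<lambda>y. f y + g y) x = E f x + E g x)) \<and>
     (\<forall>f c. continuous_map (subtopology X F) euclideanreal f \<longrightarrow>
            (\<forall>x\<in>topspace X. E (\<lambda>y. c * f y) x = c * E f x)) \<and>
     (\<exists>M. \<forall>f. continuous_map (subtopology X F) euclideanreal f \<longrightarrow>
            (\<forall>x\<in>topspace X. \<bar>E f x\<bar> \<le> M * (SUP y\<in>F. \<bar>f y\<bar>)))"

definition extension_property :: "'a topology \<Rightarrow> bool" where
  "extension_property X \<longleftrightarrow>
     (\<forall>F. closedin X F \<and> F \<noteq> {} \<longrightarrow> (\<exists>E. extension_operator X F E))"

end

theory Submission
  imports Defs
begin

text \<open>Let \<open>D\<close> be discrete and \<open>E\<close> an extension operator, of norm at most \<open>M\<close>, for the closure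
  \<open>F\<close> of \<open>D\<close>. Every point of \<open>D\<close> is isolated in \<open>F\<close>, so the indicator \<open>\<delta>\<^sub>d\<close> of \<open>{d}\<close> lies in
  \<open>C(F)\<close>, and testing \<open>E\<close> on sign combinations of the \<open>\<delta>\<^sub>d\<close> shows
  \<open>\<Sum>\<^sub>d \<bar>E \<delta>\<^sub>d x\<bar> \<le> M\<close> at every point \<open>x\<close>. Hence the open neighbourhoods
  \<open>V\<^sub>d = {E \<delta>\<^sub>d > 1/2}\<close> of the points \<open>d \<in> D\<close> form a family of order at most \<open>2M\<close>, and in a
  ccc space such a family is countable: a maximal disjoint subfamily is countable, and every
  other member meets one of its sets \<open>V\<^sub>j\<close>, inside which the order drops by one.\<close>

lemma continuous_map_indicator_clopen:
  assumes "openin X S" "closedin X S"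
  shows "continuous_map X euclideanreal (indicator S :: 'a \<Rightarrow> real)"
  unfolding continuous_map_def
proof (intro conjI allI impI)
  fix U :: "real set"
  have "S \<subseteq> topspace X"
    using assms(1) openin_subset by blast
  then have "{x \<in> topspace X. indicator S x \<in> U} =
      (if 1 \<in> U then S else {}) \<union> (if 0 \<in> U then topspace X - S else {})"
    by (auto simp: indicator_def)
  then show "openin X {x \<in> topspace X. indicator S x \<in> U}"
    using assms by auto
qed auto

lemma maximal_disjoint_subfamily:
  assumes "\<And>i. i \<in> I \<Longrightarrow> V i \<noteq> {}"
  obtains J where "J \<subseteq> I" "disjoint_family_on V J" "\<And>i. i \<in> I \<Longrightarrow> \<exists>j\<in>J. V i \<inter> V j \<noteq> {}"
proof -
  define \<A> where "\<A> = {J. J \<subseteq> I \<and> disjoint_family_on V J}"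
  have "\<exists>J\<in>\<A>. \<forall>J'\<in>\<A>. J \<subseteq> J' \<longrightarrow> J' = J"
  proof (rule Zorn_Lemma, intro ballI)
    fix \<C> assume \<C>: "\<C> \<in> chains \<A>"
    show "\<Union>\<C> \<in> \<A>"
      unfolding \<A>_def disjoint_family_on_def
    proof (intro CollectI conjI ballI impI)
      show "\<Union>\<C> \<subseteq> I"
        using \<C> unfolding chains_def \<A>_def by blast
      fix i j assume "i \<in> \<Union>\<C>" "j \<in> \<Union>\<C>" "i \<noteq> j"
      then obtain Ci Cj where "Ci \<in> \<C>" "Cj \<in> \<C>" "i \<in> Ci" "j \<in> Cj"
        by blast
      moreover have "Ci \<subseteq> Cj \<or> Cj \<subseteq> Ci"
        using \<C> \<open>Ci \<in> \<C>\<close> \<open>Cj \<in> \<C>\<close> unfolding chains_def chain_subset_def by blast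
      ultimately show "V i \<inter> V j = {}"
        using \<C> \<open>i \<noteq> j\<close> unfolding chains_def \<A>_def disjoint_family_on_def by blast
    qed
  qed
  then obtain J where J: "J \<subseteq> I" "disjoint_family_on V J"
    and maximal: "\<And>J'. J' \<subseteq> I \<Longrightarrow> disjoint_family_on V J' \<Longrightarrow> J \<subseteq> J' \<Longrightarrow> J' = J"
    unfolding \<A>_def by auto
  have "\<exists>j\<in>J. V i \<inter> V j \<noteq> {}" if "i \<in> I" for i
  proof (cases "i \<in> J")
    case True
    then show ?thesis
      using assms[OF \<open>i \<in> I\<close>] by (metis Int_absorb)
  next
    case False
    then have "insert i J \<noteq> J"
      by blast
    then have "\<not> disjoint_family_on V (insert i J)"
      using maximal[of "insert i J"] J(1) \<open>i \<in> I\<close> by blast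
    then show ?thesis
      using False J(2) by (auto simp: disjoint_family_on_insert)
  qed
  with J show thesis
    using that by blast
qed

lemma ccc_space_countable_disjoint_family:
  assumes "ccc_space X" and "\<And>i. i \<in> I \<Longrightarrow> openin X (V i) \<and> V i \<noteq> {}"
    and "disjoint_family_on V I"
  shows "countable I"
proof -
  have "disjoint (V ` I)" "inj_on V I"
    using disjoint_family_on_iff_disjoint_image[of I V] assms(2,3) by auto
  moreover have "\<forall>U\<in>V ` I. openin X U \<and> U \<noteq> {}"
    using assms(2) by blast
  ultimately show ?thesis
    using assms(1) unfolding ccc_space_def by (metis countable_image_inj_eq)
qed

lemma ccc_space_countable_if_bounded_order:
  assumes "ccc_space X"
    and "\<And>i. i \<in> I \<Longrightarrow> openin X (V i) \<and> V i \<noteq> {}"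
    and "\<And>x. x \<in> topspace X \<Longrightarrow> finite {i\<in>I. x \<in> V i} \<and> card {i\<in>I. x \<in> V i} \<le> N"
  shows "countable I"
  using assms(2,3)
proof (induction N arbitrary: I V)
  case 0
  have "I = {}"
  proof (rule ccontr)
    assume "I \<noteq> {}"
    then obtain i x where "i \<in> I" "x \<in> V i"
      using "0.prems"(1) by blast
    moreover have "x \<in> topspace X"
      using "0.prems"(1) \<open>i \<in> I\<close> \<open>x \<in> V i\<close> openin_subset by blast
    ultimately show False
      using "0.prems"(2)[of x] by auto
  qed
  then show ?case
    by simp
next
  case (Suc N)
  obtain J where J: "J \<subseteq> I" "disjoint_family_on V J"
    and meets: "\<And>i. i \<in> I \<Longrightarrow> \<exists>j\<in>J. V i \<inter> V j \<noteq> {}"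
    using maximal_disjoint_subfamily[of I V] Suc.prems(1) by blast
  have "countable J"
    by (rule ccc_space_countable_disjoint_family[OF assms(1) _ J(2)]) (use Suc.prems(1) J(1) in blast)
  define I\<^sub>j where "I\<^sub>j j = {i \<in> I - {j}. V i \<inter> V j \<noteq> {}}" for j
  have countable_I\<^sub>j: "countable (I\<^sub>j j)" if "j \<in> J" for j
  proof (rule Suc.IH[of "I\<^sub>j j" "\<lambda>i. V i \<inter> V j"])
    show "openin X (V i \<inter> V j) \<and> V i \<inter> V j \<noteq> {}" if "i \<in> I\<^sub>j j" for i
      using Suc.prems(1) J(1) \<open>j \<in> J\<close> that unfolding I\<^sub>j_def by auto
    fix x assume "x \<in> topspace X"
    show "finite {i \<in> I\<^sub>j j. x \<in> V i \<inter> V j} \<and> card {i \<in> I\<^sub>j j. x \<in> V i \<inter> V j} \<le> N"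
    proof (cases "x \<in> V j")
      case True
      \<comment> \<open>\<open>j\<close> itself is one of the at most \<open>Suc N\<close> indices at \<open>x\<close>, but is excluded from \<open>I\<^sub>j j\<close>.\<close>
      have "finite {i\<in>I. x \<in> V i}" "card ({i\<in>I. x \<in> V i} - {j}) \<le> N"
        using Suc.prems(2)[OF \<open>x \<in> topspace X\<close>] True J(1) \<open>j \<in> J\<close> by auto
      moreover have "{i \<in> I\<^sub>j j. x \<in> V i \<inter> V j} \<subseteq> {i\<in>I. x \<in> V i} - {j}"
        unfolding I\<^sub>j_def by auto
      ultimately show ?thesis
        by (meson card_mono finite_Diff finite_subset order_trans)
    next
      case False
      then have "{i \<in> I\<^sub>j j. x \<in> V i \<inter> V j} = {}"
        by blast
      then show ?thesis
        by (simp only:) simp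
    qed
  qed
  have "I \<subseteq> J \<union> (\<Union>j\<in>J. I\<^sub>j j)"
  proof
    fix i assume "i \<in> I"
    then obtain j where "j \<in> J" "V i \<inter> V j \<noteq> {}"
      using meets by blast
    with \<open>i \<in> I\<close> show "i \<in> J \<union> (\<Union>j\<in>J. I\<^sub>j j)"
      unfolding I\<^sub>j_def by (cases "i = j") auto
  qed
  moreover have "countable (J \<union> (\<Union>j\<in>J. I\<^sub>j j))"
    using \<open>countable J\<close> countable_I\<^sub>j by auto
  ultimately show ?case
    by (rule countable_subset)
qed

lemma extension_operator_continuous_map:
  assumes "extension_operator X F E" "continuous_map (subtopology X F) euclideanreal f"
  shows "continuous_map X euclideanreal (E f)"
  using assms by (simp add: extension_operator_def)

lemma extension_operator_extends:
  assumes "extension_operator X F E" "continuous_map (subtopology X F) euclideanreal f" "x \<in> F"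
  shows "E f x = f x"
  using assms by (simp add: extension_operator_def)

lemma extension_operator_add:
  assumes "extension_operator X F E" "x \<in> topspace X"
    and "continuous_map (subtopology X F) euclideanreal f"
    and "continuous_map (subtopology X F) euclideanreal g"
  shows "E (\<lambda>y. f y + g y) x = E f x + E g x"
  using assms by (simp add: extension_operator_def)

lemma extension_operator_scale:
  assumes "extension_operator X F E" "x \<in> topspace X"
    and "continuous_map (subtopology X F) euclideanreal f"
  shows "E (\<lambda>y. c * f y) x = c * E f x"
  using assms by (simp add: extension_operator_def)

lemma extension_operator_sum:
  assumes E: "extension_operator X F E" and "finite S"
    and f: "\<And>d. d \<in> S \<Longrightarrow> continuous_map (subtopology X F) euclideanreal (f d)"
    and x: "x \<in> topspace X"
  shows "E (\<lambda>y. \<Sum>d\<in>S. c d * f d y) x = (\<Sum>d\<in>S. c d * E (f d) x)"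
  using \<open>finite S\<close> f
proof (induction S rule: finite_induct)
  case empty
  show ?case
    using extension_operator_scale[OF E x continuous_map_const[THEN iffD2], of 0 0] by simp
next
  case (insert a S)
  have cont_a: "continuous_map (subtopology X F) euclideanreal (f a)"
    using insert.prems by simp
  have "continuous_map (subtopology X F) euclideanreal (\<lambda>y. \<Sum>d\<in>S. c d * f d y)"
    using insert.prems insert.hyps by (intro continuous_intros) auto
  then have "E (\<lambda>y. c a * f a y + (\<Sum>d\<in>S. c d * f d y)) x
      = E (\<lambda>y. c a * f a y) x + E (\<lambda>y. \<Sum>d\<in>S. c d * f d y) x"
    using extension_operator_add[OF E x] cont_a continuous_map_real_mult_left by blast
  also have "E (\<lambda>y. c a * f a y) x = c a * E (f a) x"
    using extension_operator_scale[OF E x cont_a] .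
  finally show ?case
    using insert by simp
qed

lemma extension_operator_bounded_on_unit_ball:
  assumes E: "extension_operator X F E" and "F \<noteq> {}"
  obtains M where "\<And>f x. continuous_map (subtopology X F) euclideanreal f \<Longrightarrow>
      (\<And>y. y \<in> F \<Longrightarrow> \<bar>f y\<bar> \<le> 1) \<Longrightarrow> x \<in> topspace X \<Longrightarrow> \<bar>E f x\<bar> \<le> M"
proof -
  obtain M where M: "\<And>f x. continuous_map (subtopology X F) euclideanreal f \<Longrightarrow>
      x \<in> topspace X \<Longrightarrow> \<bar>E f x\<bar> \<le> M * (SUP y\<in>F. \<bar>f y\<bar>)"
    using conjunct2[OF conjunct2[OF conjunct2[OF E[unfolded extension_operator_def]]]] by blast
  have "\<bar>E f x\<bar> \<le> \<bar>M\<bar>"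
    if f: "continuous_map (subtopology X F) euclideanreal f" and le1: "\<And>y. y \<in> F \<Longrightarrow> \<bar>f y\<bar> \<le> 1"
      and x: "x \<in> topspace X" for f x
  proof -
    have sup_le: "(SUP y\<in>F. \<bar>f y\<bar>) \<le> 1"
      using \<open>F \<noteq> {}\<close> le1 by (intro cSUP_least) auto
    obtain y where "y \<in> F"
      using \<open>F \<noteq> {}\<close> by blast
    with le1 have "\<bar>f y\<bar> \<le> (SUP y\<in>F. \<bar>f y\<bar>)"
      by (intro cSUP_upper bdd_aboveI[of _ 1]) auto
    then have sup_ge: "0 \<le> (SUP y\<in>F. \<bar>f y\<bar>)"
      by linarith
    have "\<bar>E f x\<bar> \<le> M * (SUP y\<in>F. \<bar>f y\<bar>)"
      using M f x .
    also have "\<dots> \<le> \<bar>M\<bar> * (SUP y\<in>F. \<bar>f y\<bar>)"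
      using sup_ge by (simp add: mult_right_mono)
    also have "\<dots> \<le> \<bar>M\<bar>"
      using sup_le sup_ge by (simp add: mult_left_le)
    finally show ?thesis .
  qed
  then show thesis
    using that by blast
qed

lemma extension_operator_indicator_sum_bounded:
  assumes E: "extension_operator X F E" and "F \<noteq> {}"
    and indicator_cont: "\<And>d. d \<in> D \<Longrightarrow> continuous_map (subtopology X F) euclideanreal (indicator {d})"
  obtains M where "\<And>S x. finite S \<Longrightarrow> S \<subseteq> D \<Longrightarrow> x \<in> topspace X \<Longrightarrow>
      (\<Sum>d\<in>S. \<bar>E (indicator {d}) x\<bar>) \<le> M"
proof -
  obtain M where M: "\<And>f x. continuous_map (subtopology X F) euclideanreal f \<Longrightarrow>
      (\<And>y. y \<in> F \<Longrightarrow> \<bar>f y\<bar> \<le> 1) \<Longrightarrow> x \<in> topspace X \<Longrightarrow> \<bar>E f x\<bar> \<le> M"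
    using extension_operator_bounded_on_unit_ball[OF E \<open>F \<noteq> {}\<close>] by blast
  have "(\<Sum>d\<in>S. \<bar>E (indicator {d}) x\<bar>) \<le> M"
    if S: "finite S" "S \<subseteq> D" and x: "x \<in> topspace X" for S x
  proof -
    define c where "c d = sgn (E (indicator {d}) x)" for d
    define h where "h y = (\<Sum>d\<in>S. c d * indicator {d} y)" for y
    have h_eq: "h y = (if y \<in> S then c y else 0)" for y
      unfolding h_def using \<open>finite S\<close> by (simp add: indicator_def sum.delta)
    have "continuous_map (subtopology X F) euclideanreal h"
      unfolding h_def using S indicator_cont by (intro continuous_intros) auto
    moreover have "\<bar>h y\<bar> \<le> 1" for y
      unfolding h_eq c_def by (auto simp: abs_sgn_eq)
    ultimately have "\<bar>E h x\<bar> \<le> M"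
      using M x by blast
    moreover have "E h x = (\<Sum>d\<in>S. c d * E (indicator {d}) x)"
      unfolding h_def
      by (rule extension_operator_sum[OF E S(1) _ x]) (use S(2) indicator_cont in blast)
    moreover have "\<dots> = (\<Sum>d\<in>S. \<bar>E (indicator {d}) x\<bar>)"
      unfolding c_def by (intro sum.cong) (auto simp: sgn_real_def)
    ultimately show ?thesis
      by linarith
  qed
  then show thesis
    using that by blast
qed

lemma finite_card_le_if_abs_sums_bounded:
  fixes a :: "'i \<Rightarrow> real"
  assumes "\<And>S. finite S \<Longrightarrow> S \<subseteq> D \<Longrightarrow> (\<Sum>d\<in>S. \<bar>a d\<bar>) \<le> M" and "0 < e"
  shows "finite {d\<in>D. e < a d} \<and> card {d\<in>D. e < a d} \<le> nat \<lfloor>M / e\<rfloor>"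
proof (rule finite_if_finite_subsets_card_bdd)
  fix G assume G: "G \<subseteq> {d\<in>D. e < a d}" "finite G"
  have "real (card G) * e = (\<Sum>d\<in>G. e)"
    by simp
  also have "\<dots> \<le> (\<Sum>d\<in>G. \<bar>a d\<bar>)"
    using G by (intro sum_mono) auto
  also have "\<dots> \<le> M"
    using assms(1) G by auto
  finally have "real (card G) \<le> M / e"
    using \<open>0 < e\<close> by (simp add: pos_le_divide_eq)
  then show "card G \<le> nat \<lfloor>M / e\<rfloor>"
    by linarith
qed

lemma discrete_subset_isolated_in_closure:
  assumes "t1_space X" "subtopology X D = discrete_topology D" "d \<in> D"
  shows "openin (subtopology X (X closure_of D)) {d}"
proof -
  have "D \<subseteq> topspace X"
    using arg_cong[OF assms(2), of topspace] by auto
  have "openin (subtopology X D) {d}"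
    using assms(2,3) by simp
  then obtain U where U: "openin X U" "U \<inter> D = {d}"
    by (auto simp: openin_subtopology)
  have "U \<inter> X closure_of D \<subseteq> X closure_of (U \<inter> D)"
    using U(1) by (rule openin_Int_closure_of_subset)
  also have "\<dots> = {d}"
    using closure_of_singleton[OF assms(1), of d] U(2) \<open>D \<subseteq> topspace X\<close> assms(3) by auto
  finally have "U \<inter> X closure_of D = {d}"
    using U(2) closure_of_subset[OF \<open>D \<subseteq> topspace X\<close>] by blast
  moreover have "openin (subtopology X (X closure_of D)) (U \<inter> X closure_of D)"
    using U(1) by (rule openin_subtopology_Int)
  ultimately show ?thesis
    by simp
qed

lemma discrete_point_indicator_continuous_on_closure:
  assumes "t1_space X" "subtopology X D = discrete_topology D" "d \<in> D"
  shows "continuous_map (subtopology X (X closure_of D)) euclideanreal (indicator {d})"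
proof (rule continuous_map_indicator_clopen)
  show "openin (subtopology X (X closure_of D)) {d}"
    using discrete_subset_isolated_in_closure[OF assms] .
  then have "d \<in> topspace X \<inter> X closure_of D"
    using openin_subset by fastforce
  then show "closedin (subtopology X (X closure_of D)) {d}"
    by (intro closedin_t1_singleton[OF t1_space_subtopology[OF assms(1)]]) auto
qed

lemma ccc_space_countable_if_extension_operator:
  assumes "ccc_space X" and E: "extension_operator X F E" and "D \<subseteq> F" "D \<subseteq> topspace X"
    and indicator_cont: "\<And>d. d \<in> D \<Longrightarrow> continuous_map (subtopology X F) euclideanreal (indicator {d})"
  shows "countable D"
proof (cases "D = {}")
  case False
  then obtain M where M: "\<And>S x. finite S \<Longrightarrow> S \<subseteq> D \<Longrightarrow> x \<in> topspace X \<Longrightarrow>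
      (\<Sum>d\<in>S. \<bar>E (indicator {d}) x\<bar>) \<le> M"
    using extension_operator_indicator_sum_bounded[OF E _ indicator_cont] \<open>D \<subseteq> F\<close> by blast
  define V where "V d = {x \<in> topspace X. 1/2 < E (indicator {d}) x}" for d
  have "openin X (V d) \<and> V d \<noteq> {}" if "d \<in> D" for d
  proof
    show "openin X (V d)"
      using extension_operator_continuous_map[OF E indicator_cont[OF that]]
      unfolding V_def continuous_map_upper_lower_semicontinuous_lt by blast
    have "E (indicator {d}) d = 1"
      using extension_operator_extends[OF E indicator_cont[OF that]] that \<open>D \<subseteq> F\<close> by auto
    then show "V d \<noteq> {}"
      using that \<open>D \<subseteq> topspace X\<close> unfolding V_def by auto
  qed
  moreover have "finite {d\<in>D. x \<in> V d} \<and> card {d\<in>D. x \<in> V d} \<le> nat \<lfloor>M / (1/2)\<rfloor>"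
    if "x \<in> topspace X" for x
    using finite_card_le_if_abs_sums_bounded[of D "\<lambda>d. E (indicator {d}) x" M "1/2"] M that
    unfolding V_def by auto
  ultimately show ?thesis
    using ccc_space_countable_if_bounded_order[OF assms(1)] by blast
qed simp

theorem corollary3p16:
  fixes K :: "'a topology"
  assumes "compact_space K" and "Hausdorff_space K"
    and "extension_property K" and "ccc_space K"
  shows "countable_spread K"
  unfolding countable_spread_def
proof (intro allI impI)
  fix D assume D: "D \<subseteq> topspace K \<and> subtopology K D = discrete_topology D"
  have t1: "t1_space K"
    using assms(2) by (rule Hausdorff_imp_t1_space)
  define F where "F = K closure_of D"
  have "D \<subseteq> F"
    unfolding F_def using D closure_of_subset by blast
  show "countable D"
  proof (cases "D = {}")
    case False
    then have "closedin K F" "F \<noteq> {}"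
      using \<open>D \<subseteq> F\<close> by (auto simp: F_def)
    then obtain E where E: "extension_operator K F E"
      using assms(3) unfolding extension_property_def by blast
    have indicator_cont: "continuous_map (subtopology K F) euclideanreal (indicator {d})"
      if "d \<in> D" for d
      unfolding F_def by (rule discrete_point_indicator_continuous_on_closure[OF t1 _ that]) (use D in blast)
    show ?thesis
      by (rule ccc_space_countable_if_extension_operator[OF assms(4) E \<open>D \<subseteq> F\<close> _ indicator_cont])
        (use D in blast)
  qed simp
qed

end
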